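(* For all sufficiently small $a>0$: if $(x,y)\in R$, $x\ne2$, $|y|\le a$ and $(x,y)\notin V_a$, then $\mathbf{W}(x,y)\notin V_a$. Furthermore, a $\mathbf{W}$-orbit $(z_k)$ converges to $p_0$ if and only if there exist $a'\in(0,1/10]$ and $k_0$ such that $z_k\in V_{a'}$ for all $k\ge k_0$.
   Context: For $x>0$, $y\in\mathbb{R}$ let $r_1^2=4+x^2+4x^2y^2$, $\Delta=((x+2)^2+8x^2y^2)((x-2)^2+8x^2y^2)$ and $\omega_\pm(x,y)=\frac{x^2-4\pm\sqrt{\Delta}}{2r_1^2}$. Let $p_0=(2,0)$, $R=\{(x,y): x>0,\ 4-4y^2-x^2y^2-8x^2y^4\ge 0\}$, $R_+=R\cap((0,2]\times\mathbb{R})$, $R_-=R\cap([2,\infty)\times\mathbb{R})$, and $r$ the line $x=2$. Define $\mathbf{W}_\pm(x,y)=\left(\frac{1+\omega_\pm}{1-\omega_\pm}x,\ \frac{|\omega_\pm|}{1+\omega_\pm}y\right)$ on $R_\pm$, and $\mathbf{W}$ on $R\setminus(r\setminus\{p_0\})$ by $\mathbf{W}=\mathbf{W}_+$ for $x<2$, $\mathbf{W}=\mathbf{W}_-$ for $x>2$, $\mathbf{W}(p_0)=p_0$. The $\mathbf{W}$-orbit of $z_0$ is $z_{k+1}=\mathbf{W}(z_k)$, defined as long as no $z_k$ lies on $r\setminus\{p_0\}$. For $0<a\le1/10$, $V_a=\{(x,y): |y|\le a,\ |y|\ge|x-2|/10\}$. *)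

theory Defs
  imports "HOL-Analysis.Analysis"
begin

definition r1sq :: "real \<Rightarrow> real \<Rightarrow> real" where
  "r1sq x y = 4 + x^2 + 4 * x^2 * y^2"

definition Delta :: "real \<Rightarrow> real \<Rightarrow> real" where
  "Delta x y = ((x + 2)^2 + 8 * x^2 * y^2) * ((x - 2)^2 + 8 * x^2 * y^2)"

definition omega_plus :: "real \<Rightarrow> real \<Rightarrow> real" where
  "omega_plus x y = (x^2 - 4 + sqrt (Delta x y)) / (2 * r1sq x y)"

definition omega_minus :: "real \<Rightarrow> real \<Rightarrow> real" where
  "omega_minus x y = (x^2 - 4 - sqrt (Delta x y)) / (2 * r1sq x y)"

definition p0 :: "real \<times> real" where
  "p0 = (2, 0)"

definition Rset :: "(real \<times> real) set" where
  "Rset = {(x, y). x > 0 \<and> 4 - 4 * y^2 - x^2 * y^2 - 8 * x^2 * y^4 \<ge> 0}"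

definition W_plus :: "real \<times> real \<Rightarrow> real \<times> real" where
  "W_plus z = (let x = fst z; y = snd z; w = omega_plus x y in
     ((1 + w) / (1 - w) * x, \<bar>w\<bar> / (1 + w) * y))"

definition W_minus :: "real \<times> real \<Rightarrow> real \<times> real" where
  "W_minus z = (let x = fst z; y = snd z; w = omega_minus x y in
     ((1 + w) / (1 - w) * x, \<bar>w\<bar> / (1 + w) * y))"

text \<open>The map W; it is only meaningful on Rset minus the points of the line x = 2 other
  than p0 (there its value is irrelevant and chosen as undefined).\<close>
definition W :: "real \<times> real \<Rightarrow> real \<times> real" where
  "W z = (if fst z < 2 then W_plus z
          else if fst z > 2 then W_minus z
          else if z = p0 then p0 else undefined)"

definition V :: "real \<Rightarrow> (real \<times> real) set" where
  "V a = {(x, y). \<bar>y\<bar> \<le> a \<and> \<bar>y\<bar> \<ge> \<bar>x - 2\<bar> / 10}"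

definition W_orbit :: "(nat \<Rightarrow> real \<times> real) \<Rightarrow> bool" where
  "W_orbit z \<longleftrightarrow> (\<forall>k. z k \<in> Rset \<and> (fst (z k) = 2 \<longrightarrow> z k = p0) \<and> z (Suc k) = W (z k))"

end

theory Submission
  imports Defs
begin

text \<open>On both branches \<open>\<bar>\<omega>\<^sub>\<plusminus>\<bar>\<close> is \<open>m = (\<surd>\<Delta> - \<bar>x\<^sup>2 - 4\<bar>) / (2 r\<^sub>1\<^sup>2)\<close>, and
  \<open>\<Delta> = (x\<^sup>2 - 4)\<^sup>2 + 16 x\<^sup>2 y\<^sup>2 r\<^sub>1\<^sup>2\<close> gives \<open>m (\<surd>\<Delta> + \<bar>x\<^sup>2 - 4\<bar>) = 8 x\<^sup>2 y\<^sup>2\<close>.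
  Hence \<open>m \<le> 2 \<bar>y\<bar>\<close> and \<open>m \<bar>x\<^sup>2 - 4\<bar> \<le> 4 x\<^sup>2 y\<^sup>2\<close>; one step of \<open>W\<close> moves \<open>x\<close> by at most
  \<open>4 m x\<close> and multiplies \<open>\<bar>y\<bar>\<close> by at most \<open>2 m\<close>.
  Inside \<open>V\<^sub>a\<close> the ordinate therefore contracts geometrically, and the cone condition
  \<open>\<bar>x - 2\<bar> \<le> 10 \<bar>y\<bar>\<close> drags \<open>x\<close> to \<open>2\<close>. Outside the cone and near \<open>p\<^sub>0\<close>, the second bound
  makes \<open>m = O(\<bar>y\<bar>)\<close> with a small constant, so the gap \<open>\<bar>x - 2\<bar> - 10 \<bar>y\<bar>\<close> never
  decreases: an orbit that is outside \<open>V\<^sub>a\<close> stays outside and cannot reach \<open>p\<^sub>0\<close>.\<close>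

definition omega_abs :: "real \<Rightarrow> real \<Rightarrow> real" where
  "omega_abs x y = (sqrt (Delta x y) - \<bar>x^2 - 4\<bar>) / (2 * r1sq x y)"

lemma r1sq_ge: "x^2 + 4 \<le> r1sq x y"
  unfolding r1sq_def by simp

lemma r1sq_pos: "0 < r1sq x y"
  by (rule less_le_trans[OF _ r1sq_ge]) (simp add: add_nonneg_pos)

lemma Delta_eq: "Delta x y = (x^2 - 4)^2 + 16 * x^2 * y^2 * r1sq x y"
  unfolding Delta_def r1sq_def by algebra

lemma omega_abs_mult_eq: "omega_abs x y * (sqrt (Delta x y) + \<bar>x^2 - 4\<bar>) = 8 * x^2 * y^2"
proof -
  define D P where "D = sqrt (Delta x y)" and "P = \<bar>x^2 - 4\<bar>"
  have "0 \<le> Delta x y"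
    unfolding Delta_eq using r1sq_pos[of x y] by simp
  then have "D^2 - P^2 = 16 * x^2 * y^2 * r1sq x y"
    unfolding D_def P_def Delta_eq by simp
  then have "(D - P) * (D + P) = 16 * x^2 * y^2 * r1sq x y"
    by (simp add: power2_eq_square algebra_simps)
  then show ?thesis
    using r1sq_pos[of x y] unfolding omega_abs_def D_def[symmetric] P_def[symmetric]
    by (simp add: field_simps)
qed

lemma sqrt_Delta_ge: "\<bar>x^2 - 4\<bar> \<le> sqrt (Delta x y)"
  using real_sqrt_le_mono[of "(x^2 - 4)^2" "Delta x y"] r1sq_pos[of x y]
  unfolding Delta_eq by simp

lemma omega_abs_nonneg: "0 \<le> omega_abs x y"
  unfolding omega_abs_def using sqrt_Delta_ge[of x y] r1sq_pos[of x y] by simp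

lemma omega_abs_mult_le: "omega_abs x y * \<bar>x^2 - 4\<bar> \<le> 4 * x^2 * y^2"
proof -
  have "omega_abs x y * (2 * \<bar>x^2 - 4\<bar>) \<le> omega_abs x y * (sqrt (Delta x y) + \<bar>x^2 - 4\<bar>)"
    using sqrt_Delta_ge[of x y] omega_abs_nonneg[of x y] by (intro mult_left_mono) auto
  then show ?thesis
    unfolding omega_abs_mult_eq by simp
qed

lemma omega_abs_le: "omega_abs x y \<le> 2 * \<bar>y\<bar>"
proof -
  define m where "m = omega_abs x y"
  have "2 * r1sq x y * m = sqrt (Delta x y) - \<bar>x^2 - 4\<bar>"
    unfolding m_def omega_abs_def using r1sq_pos[of x y] by simp
  also have "\<dots> \<le> sqrt (Delta x y) + \<bar>x^2 - 4\<bar>"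
    by simp
  finally have "2 * r1sq x y * m * m \<le> 8 * x^2 * y^2"
    using omega_abs_mult_eq[of x y] omega_abs_nonneg[of x y] unfolding m_def[symmetric]
    by (metis mult.commute mult_right_mono)
  also have "\<dots> \<le> 8 * r1sq x y * y^2"
    using r1sq_ge[of x y] by (intro mult_right_mono) auto
  finally have "m^2 \<le> (2 * \<bar>y\<bar>)^2"
    using r1sq_pos[of x y] by (simp add: power2_eq_square mult_le_cancel_left_pos)
  then show ?thesis
    unfolding m_def by (rule power2_le_imp_le) simp
qed

lemma omega_plus_eq: "x^2 \<le> 4 \<Longrightarrow> omega_plus x y = omega_abs x y"
  unfolding omega_plus_def omega_abs_def by simp

lemma omega_minus_eq: "4 \<le> x^2 \<Longrightarrow> omega_minus x y = - omega_abs x y"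
  unfolding omega_minus_def omega_abs_def by (simp add: diff_divide_distrib)

lemma W_less_2:
  assumes "-2 \<le> x" "x < 2"
  shows "W (x, y) = ((1 + omega_abs x y) / (1 - omega_abs x y) * x,
                    omega_abs x y / (1 + omega_abs x y) * y)"
proof -
  have "x^2 \<le> 4"
    using assms abs_le_square_iff[of x 2] by (simp add: abs_le_iff)
  then show ?thesis
    using assms omega_abs_nonneg[of x y]
    by (simp add: W_def W_plus_def omega_plus_eq Let_def)
qed

lemma W_greater_2:
  assumes "2 < x"
  shows "W (x, y) = ((1 - omega_abs x y) / (1 + omega_abs x y) * x,
                    omega_abs x y / (1 - omega_abs x y) * y)"
proof -
  have "4 \<le> x^2"
    using assms abs_le_square_iff[of 2 x] by simp
  then show ?thesis
    using assms omega_abs_nonneg[of x y]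
    by (simp add: W_def W_minus_def omega_minus_eq Let_def)
qed

lemma W_displacement:
  assumes "0 < x" "x \<noteq> 2" "\<bar>y\<bar> \<le> 1/4"
  shows "\<bar>fst (W (x, y)) - x\<bar> \<le> 4 * omega_abs x y * x"
    and "\<bar>snd (W (x, y))\<bar> \<le> 2 * omega_abs x y * \<bar>y\<bar>"
proof -
  define m where "m = omega_abs x y"
  have m: "0 \<le> m" "m \<le> 1/2"
    using omega_abs_nonneg[of x y] omega_abs_le[of x y] assms(3) unfolding m_def by auto
  have m_sq: "2 * m * m \<le> m"
    using m mult_right_mono[of "2 * m" 1 m] by simp
  have "\<bar>fst (W (x, y)) - x\<bar> \<le> 4 * m * x \<and> \<bar>snd (W (x, y))\<bar> \<le> 2 * m * \<bar>y\<bar>"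
  proof (cases "x < 2")
    case True
    then have "W (x, y) = ((1 + m) / (1 - m) * x, m / (1 + m) * y)"
      using W_less_2[of x y] assms(1) unfolding m_def by simp
    then show ?thesis
      using assms(1) m mult_right_mono[OF m_sq, of x]
      by (simp add: field_simps abs_mult mult_right_mono)
  next
    case False
    then have "W (x, y) = ((1 - m) / (1 + m) * x, m / (1 - m) * y)"
      using W_greater_2[of x y] assms(2) unfolding m_def by simp
    then show ?thesis
      using assms(1) m mult_right_mono[OF m_sq, of "\<bar>y\<bar>"]
      by (simp add: field_simps abs_mult mult_right_mono)
  qed
  then show "\<bar>fst (W (x, y)) - x\<bar> \<le> 4 * omega_abs x y * x"
    and "\<bar>snd (W (x, y))\<bar> \<le> 2 * omega_abs x y * \<bar>y\<bar>"
    unfolding m_def by auto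
qed

lemma abs_snd_W_le:
  assumes "0 < x" "x \<noteq> 2" "\<bar>y\<bar> \<le> 1/10"
  shows "\<bar>snd (W (x, y))\<bar> \<le> 2/5 * \<bar>y\<bar>"
proof -
  have m: "0 \<le> omega_abs x y" "omega_abs x y \<le> 1/5"
    using omega_abs_nonneg[of x y] omega_abs_le[of x y] assms(3) by auto
  then have "2 * omega_abs x y * \<bar>y\<bar> \<le> 2/5 * \<bar>y\<bar>"
    by (intro mult_right_mono) auto
  moreover have "\<bar>snd (W (x, y))\<bar> \<le> 2 * omega_abs x y * \<bar>y\<bar>"
    using W_displacement(2) assms by simp
  ultimately show ?thesis
    by linarith
qed

definition cone_gap :: "real \<times> real \<Rightarrow> real" where
  "cone_gap z = \<bar>fst z - 2\<bar> - 10 * \<bar>snd z\<bar>"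

lemma V_iff_cone_gap: "z \<in> V a \<longleftrightarrow> \<bar>snd z\<bar> \<le> a \<and> cone_gap z \<le> 0"
  by (cases z) (auto simp: V_def cone_gap_def)

lemma omega_abs_le_off_cone:
  assumes "0 < x" "x \<le> 3" "x \<noteq> 2" "10 * \<bar>y\<bar> \<le> \<bar>x - 2\<bar>"
  shows "omega_abs x y \<le> 18/25 * \<bar>y\<bar>"
proof -
  have "x^2 - 4 = (x - 2) * (x + 2)"
    by algebra
  then have "\<bar>x^2 - 4\<bar> = \<bar>x - 2\<bar> * (x + 2)"
    using assms(1) by (simp add: abs_mult)
  then have "omega_abs x y * \<bar>x - 2\<bar> * (x + 2) \<le> 4 * x^2 * \<bar>y\<bar> * \<bar>y\<bar>"
    using omega_abs_mult_le[of x y] by (simp add: power2_eq_square abs_mult_self_eq mult.assoc)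
  also have "\<dots> \<le> 4 * x^2 * \<bar>y\<bar> * (\<bar>x - 2\<bar> / 10)"
    using assms(4) by (intro mult_left_mono) auto
  also have "\<dots> \<le> 4 * (9/5 * (x + 2)) * \<bar>y\<bar> * (\<bar>x - 2\<bar> / 10)"
  proof -
    have "x^2 \<le> 3 * x"
      using assms(1,2) by (simp add: power2_eq_square mult_right_mono)
    then show ?thesis
      using assms(2) by (intro mult_right_mono mult_left_mono) auto
  qed
  finally have "omega_abs x y * (\<bar>x - 2\<bar> * (x + 2)) \<le> (18/25 * \<bar>y\<bar>) * (\<bar>x - 2\<bar> * (x + 2))"
    by (simp add: algebra_simps)
  then show ?thesis
    by (rule mult_right_le_imp_le) (use assms(1,3) in simp)
qed

text \<open>Here \<open>m \<le> 18/25 \<bar>y\<bar>\<close>, so the horizontal step (at most \<open>12 m\<close>) is smaller than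
  \<open>10 (\<bar>y\<bar> - \<bar>y'\<bar>)\<close>, the gain from the shrinking ordinate \<open>y'\<close>.\<close>
lemma cone_gap_W_ge:
  assumes "0 < x" "x \<le> 3" "x \<noteq> 2" "\<bar>y\<bar> \<le> 1/100" "0 \<le> cone_gap (x, y)"
  shows "cone_gap (x, y) \<le> cone_gap (W (x, y))"
proof -
  define m where "m = omega_abs x y"
  have m: "0 \<le> m" "m \<le> 18/25 * \<bar>y\<bar>"
    using omega_abs_nonneg[of x y] omega_abs_le_off_cone[OF assms(1-3)] assms(5)
    unfolding m_def cone_gap_def by auto
  have "\<bar>fst (W (x, y)) - x\<bar> \<le> 4 * m * x"
    using W_displacement(1) assms(1,3,4) unfolding m_def by simp
  moreover have "4 * m * x \<le> 12 * m"
    using m assms(2) mult_left_mono[of x 3 "4 * m"] by simp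
  moreover have "\<bar>snd (W (x, y))\<bar> \<le> 2 * m * \<bar>y\<bar>"
    using W_displacement(2) assms(1,3,4) unfolding m_def by simp
  moreover have "2 * m * \<bar>y\<bar> \<le> m / 50"
    using m assms(4) mult_left_mono[of "\<bar>y\<bar>" "1/100" "2 * m"] by simp
  ultimately show ?thesis
    using m unfolding cone_gap_def fst_conv snd_conv by arith
qed

lemma cone_gap_W_pos_far:
  assumes "3 \<le> x" "\<bar>y\<bar> \<le> 1/100"
  shows "0 < cone_gap (W (x, y))"
proof -
  define m where "m = omega_abs x y"
  have m: "0 \<le> m" "m \<le> 1/50"
    using omega_abs_nonneg[of x y] omega_abs_le[of x y] assms(2) unfolding m_def by auto
  have x: "0 < x" "x \<noteq> 2"
    using assms(1) by auto
  have "\<bar>fst (W (x, y)) - x\<bar> \<le> 4 * m * x"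
    using W_displacement(1) x assms(2) unfolding m_def by simp
  moreover have "4 * m * x \<le> 2/25 * x"
    using assms(1) m by (intro mult_right_mono) auto
  moreover have "\<bar>snd (W (x, y))\<bar> \<le> 2 * m * \<bar>y\<bar>"
    using W_displacement(2) x assms(2) unfolding m_def by simp
  moreover have "2 * m * \<bar>y\<bar> \<le> 1/25 * (1/100)"
    using assms(2) m by (intro mult_mono) auto
  ultimately show ?thesis
    using assms(1) unfolding cone_gap_def by arith
qed

lemma W_not_in_V:
  assumes "a \<le> 1/100" "0 < x" "x \<noteq> 2" "\<bar>y\<bar> \<le> a" "(x, y) \<notin> V a"
  shows "W (x, y) \<notin> V a"
proof -
  have "0 < cone_gap (x, y)"
    using assms(4,5) unfolding V_iff_cone_gap by simp
  then have "0 < cone_gap (W (x, y))"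
    using cone_gap_W_ge[of x y] cone_gap_W_pos_far[of x y] assms(1-4)
    by (cases "x \<le> 3") auto
  then show ?thesis
    unfolding V_iff_cone_gap by simp
qed

lemma Rset_fst_pos: "z \<in> Rset \<Longrightarrow> 0 < fst z"
  by (cases z) (simp add: Rset_def)

lemma W_orbit_fst_pos: "W_orbit z \<Longrightarrow> 0 < fst (z k)"
  unfolding W_orbit_def using Rset_fst_pos by blast

lemma W_orbit_Suc: "W_orbit z \<Longrightarrow> z (Suc k) = W (z k)"
  unfolding W_orbit_def by blast

lemma W_orbit_on_line: "W_orbit z \<Longrightarrow> fst (z k) = 2 \<Longrightarrow> z k = p0"
  unfolding W_orbit_def by blast

lemma W_orbit_tendsto_p0:
  assumes orbit: "W_orbit z" and "a \<le> 1/10" and in_V: "\<forall>k\<ge>k0. z k \<in> V a"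
  shows "z \<longlonglongrightarrow> p0"
proof -
  have contract: "\<bar>snd (z (Suc k))\<bar> \<le> 2/5 * \<bar>snd (z k)\<bar>" if "k \<ge> k0" for k
  proof (cases "fst (z k) = 2")
    case True
    then have "z (Suc k) = p0"
      using W_orbit_on_line[OF orbit True] W_orbit_Suc[OF orbit, of k] by (simp add: W_def)
    then show ?thesis
      by (simp add: p0_def)
  next
    case False
    have "\<bar>snd (z k)\<bar> \<le> 1/10"
      using in_V that assms(2) unfolding V_iff_cone_gap by force
    then show ?thesis
      using abs_snd_W_le[of "fst (z k)" "snd (z k)"] W_orbit_fst_pos[OF orbit] False
      by (simp add: W_orbit_Suc[OF orbit])
  qed
  have geometric: "\<bar>snd (z (j + k0))\<bar> \<le> (2/5)^j * \<bar>snd (z k0)\<bar>" for j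
  proof (induction j)
    case (Suc j)
    then show ?case
      using contract[of "j + k0"] by simp
  qed simp
  have "(\<lambda>j. (2/5)^j * \<bar>snd (z k0)\<bar>) \<longlonglongrightarrow> 0"
    by (intro tendsto_mult_left_zero LIMSEQ_power_zero) simp
  then have "(\<lambda>j. snd (z (j + k0))) \<longlonglongrightarrow> 0"
    by (rule Lim_null_comparison[rotated]) (simp add: geometric)
  then have snd_lim: "(\<lambda>k. snd (z k)) \<longlonglongrightarrow> 0"
    by (rule LIMSEQ_offset)
  have "\<forall>\<^sub>F k in sequentially. norm (fst (z k) - 2) \<le> 10 * \<bar>snd (z k)\<bar>"
    using in_V unfolding V_iff_cone_gap cone_gap_def eventually_sequentially by force
  moreover have "(\<lambda>k. 10 * \<bar>snd (z k)\<bar>) \<longlonglongrightarrow> 0"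
    using tendsto_mult_right_zero[OF tendsto_rabs_zero[OF snd_lim]] by simp
  ultimately have "(\<lambda>k. fst (z k) - 2) \<longlonglongrightarrow> 0"
    by (rule Lim_null_comparison)
  then have "(\<lambda>k. (fst (z k), snd (z k))) \<longlonglongrightarrow> (2, 0)"
    using snd_lim by (intro tendsto_Pair) (simp_all add: LIM_zero_iff)
  then show ?thesis
    by (simp add: p0_def)
qed

lemma W_orbit_eventually_in_V:
  assumes orbit: "W_orbit z" and lim: "z \<longlonglongrightarrow> p0"
  shows "\<exists>k0. \<forall>k\<ge>k0. z k \<in> V (1/100)"
proof (rule ccontr)
  assume not_in_V: "\<nexists>k0. \<forall>k\<ge>k0. z k \<in> V (1/100)"
  have fst_lim: "(\<lambda>k. fst (z k)) \<longlonglongrightarrow> 2" and snd_lim: "(\<lambda>k. snd (z k)) \<longlonglongrightarrow> 0"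
    using tendsto_fst[OF lim] tendsto_snd[OF lim] by (simp_all add: p0_def)
  have gap_lim: "(\<lambda>k. cone_gap (z k)) \<longlonglongrightarrow> 0"
    unfolding cone_gap_def using lim by (auto intro!: tendsto_eq_intros simp: p0_def)
  have "\<forall>\<^sub>F k in sequentially. dist (fst (z k)) 2 < 1 \<and> dist (snd (z k)) 0 < 1/100"
    by (intro eventually_conj tendstoD[OF fst_lim] tendstoD[OF snd_lim]) simp_all
  then obtain N where near: "\<And>k. k \<ge> N \<Longrightarrow> \<bar>fst (z k) - 2\<bar> < 1 \<and> \<bar>snd (z k)\<bar> < 1/100"
    unfolding eventually_sequentially dist_real_def by auto
  obtain k1 where "k1 \<ge> N" "z k1 \<notin> V (1/100)"
    using not_in_V by blast
  then have gap_pos: "0 < cone_gap (z k1)"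
    using near unfolding V_iff_cone_gap by force
  have gap_ge: "cone_gap (z k1) \<le> cone_gap (z (k1 + j))" for j
  proof (induction j)
    case (Suc j)
    define x y where "x = fst (z (k1 + j))" and "y = snd (z (k1 + j))"
    have "0 < x" "x \<le> 3" "\<bar>y\<bar> \<le> 1/100"
      using W_orbit_fst_pos[OF orbit] near[of "k1 + j"] \<open>k1 \<ge> N\<close> unfolding x_def y_def by auto
    moreover have "0 < cone_gap (x, y)"
      using Suc gap_pos unfolding x_def y_def by simp
    moreover from this have "x \<noteq> 2"
      unfolding cone_gap_def by auto
    ultimately have "cone_gap (x, y) \<le> cone_gap (W (x, y))"
      by (intro cone_gap_W_ge) auto
    then show ?case
      using Suc W_orbit_Suc[OF orbit, of "k1 + j"] unfolding x_def y_def by simp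
  qed simp
  have "cone_gap (z k1) \<le> 0"
    using gap_lim by (rule LIMSEQ_le_const) (metis gap_ge le_Suc_ex)
  then show False
    using gap_pos by simp
qed

theorem lemma5p2:
  shows "(\<exists>a0>0. \<forall>a. 0 < a \<and> a \<le> a0 \<longrightarrow>
            (\<forall>x y. (x, y) \<in> Rset \<and> x \<noteq> 2 \<and> \<bar>y\<bar> \<le> a \<and> (x, y) \<notin> V a
                   \<longrightarrow> W (x, y) \<notin> V a))
       \<and> (\<forall>z. W_orbit z \<longrightarrow>
            (z \<longlonglongrightarrow> p0 \<longleftrightarrow>
             (\<exists>a'. 0 < a' \<and> a' \<le> 1/10 \<and> (\<exists>k0. \<forall>k\<ge>k0. z k \<in> V a'))))"
proof (intro conjI allI impI iffI)
  show "\<exists>a0>0. \<forall>a. 0 < a \<and> a \<le> a0 \<longrightarrow>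
          (\<forall>x y. (x, y) \<in> Rset \<and> x \<noteq> 2 \<and> \<bar>y\<bar> \<le> a \<and> (x, y) \<notin> V a \<longrightarrow> W (x, y) \<notin> V a)"
  proof (intro exI[of _ "1/100"] conjI allI impI)
    fix a x y :: real
    assume "0 < a \<and> a \<le> 1/100"
      and "(x, y) \<in> Rset \<and> x \<noteq> 2 \<and> \<bar>y\<bar> \<le> a \<and> (x, y) \<notin> V a"
    then show "W (x, y) \<notin> V a"
      using W_not_in_V[of a x y] Rset_fst_pos[of "(x, y)"] by simp
  qed simp
next
  fix z :: "nat \<Rightarrow> real \<times> real"
  assume "W_orbit z" and "z \<longlonglongrightarrow> p0"
  then show "\<exists>a'. 0 < a' \<and> a' \<le> 1/10 \<and> (\<exists>k0. \<forall>k\<ge>k0. z k \<in> V a')"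
    by (intro exI[of _ "1/100"]) (simp add: W_orbit_eventually_in_V)
next
  fix z :: "nat \<Rightarrow> real \<times> real"
  assume "W_orbit z" and "\<exists>a'. 0 < a' \<and> a' \<le> 1/10 \<and> (\<exists>k0. \<forall>k\<ge>k0. z k \<in> V a')"
  then show "z \<longlonglongrightarrow> p0"
    using W_orbit_tendsto_p0 by blast
qed

end
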